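(* Let $\mathfrak{g}=\mathfrak{sl}(2,\mathbb{R})$, with basis $(Y_1,Y_2,Y_3)$ satisfying $[Y_1,Y_2]=Y_3$, $[Y_1,Y_3]=Y_2$, $[Y_2,Y_3]=Y_1$, and with basis $(H,X_+,X_-)$ where $H=\begin{pmatrix}1&0\\0&-1\end{pmatrix}$, $X_+=\begin{pmatrix}0&1\\0&0\end{pmatrix}$, $X_-=\begin{pmatrix}0&0\\-1&0\end{pmatrix}$ (so $[H,X_+]=2X_+$, $[H,X_-]=-2X_-$, $[X_+,X_-]=H$, and $Y_1=\frac12 H$, $Y_2=\frac12(X_+-X_-)$, $Y_3=\frac12(X_++X_-)$). Let $J:\mathfrak{g}\to\mathfrak{g}$ be any linear map. Then $J$ has zero torsion if and only if it is equivalent to the endomorphism whose matrix in the basis $(Y_1,Y_2,Y_3)$ is $$J_*(\lambda)=\begin{pmatrix}0&0&-1\\0&\lambda&0\\1&0&0\end{pmatrix}$$ for some $\lambda\in\mathbb{R}$, and $J_*(\lambda)\not\equiv J_*(\mu)$ for $\lambda\neq\mu$. Equivalently, $J$ has zero torsion if and only if it is equivalent to the endomorphism whose matrix in the basis $(H,X_+,X_-)$ is $$J(\alpha)=\begin{pmatrix}0&-\frac12&-\frac12\\1&\alpha&-\alpha\\1&-\alpha&\alpha\end{pmatrix}$$ for some $\alpha\in\mathbb{R}$, and $J(\alpha)\not\equiv J(\beta)$ for $\alpha\neq\beta$.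
   Context: A linear map $J:\mathfrak{g}\to\mathfrak{g}$ on a real Lie algebra has zero torsion if $[JX,JY]-[X,Y]-J[JX,Y]-J[X,JY]=0$ for all $X,Y\in\mathfrak{g}$. Two linear maps $J,J'$ on $\mathfrak{g}$ are equivalent ($J\equiv J'$) if there is a Lie algebra automorphism $\Phi\in\mathrm{Aut}\,\mathfrak{g}$ with $J'=\Phi\circ J\circ\Phi^{-1}$. The matrix of a linear map in a basis $(e_j)$ is $(\xi^i_j)$ with $Je_j=\sum_i\xi^i_j e_i$ (the $j$-th column gives the coordinates of $Je_j$). *)

theory Defs
  imports "HOL-Analysis.Analysis"
begin

text \<open>The Lie algebra sl(2,R) is modelled on real^3, a vector x standing for
  x$1 Y1 + x$2 Y2 + x$3 Y3, where (Y1,Y2,Y3) is the basis with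
  [Y1,Y2] = Y3, [Y1,Y3] = Y2, [Y2,Y3] = Y1.\<close>

definition sl2_bracket :: "real^3 \<Rightarrow> real^3 \<Rightarrow> real^3" where
  "sl2_bracket x y = vector [x$2 * y$3 - x$3 * y$2,
                             x$1 * y$3 - x$3 * y$1,
                             x$1 * y$2 - x$2 * y$1]"

definition Ybasis :: "3 \<Rightarrow> real^3" where
  "Ybasis j = axis j 1"

definition HXbasis :: "3 \<Rightarrow> real^3" where
  "HXbasis j = (if j = 1 then vector [2, 0, 0]
                else if j = 2 then vector [0, 1, 1]
                else vector [0, -1, 1])"

definition zero_torsion :: "(real^3 \<Rightarrow> real^3) \<Rightarrow> bool" where
  "zero_torsion J \<longleftrightarrow> (\<forall>X Y. sl2_bracket (J X) (J Y) - sl2_bracket X Y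
      - J (sl2_bracket (J X) Y) - J (sl2_bracket X (J Y)) = 0)"

definition sl2_aut :: "(real^3 \<Rightarrow> real^3) \<Rightarrow> bool" where
  "sl2_aut \<Phi> \<longleftrightarrow> linear \<Phi> \<and> bij \<Phi> \<and>
     (\<forall>X Y. \<Phi> (sl2_bracket X Y) = sl2_bracket (\<Phi> X) (\<Phi> Y))"

definition sl2_equiv :: "(real^3 \<Rightarrow> real^3) \<Rightarrow> (real^3 \<Rightarrow> real^3) \<Rightarrow> bool" where
  "sl2_equiv J J' \<longleftrightarrow> (\<exists>\<Phi>. sl2_aut \<Phi> \<and> J' = \<Phi> \<circ> J \<circ> inv \<Phi>)"

text \<open>L has matrix M in basis b: L (b j) = sum_i M$i$j b i (column j = coords of L(b j)).\<close>
definition has_matrix_in_basis :: "(real^3 \<Rightarrow> real^3) \<Rightarrow> (3 \<Rightarrow> real^3) \<Rightarrow> real^3^3 \<Rightarrow> bool" where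
  "has_matrix_in_basis L b M \<longleftrightarrow> (\<forall>j. L (b j) = (\<Sum>i\<in>UNIV. M$i$j *\<^sub>R b i))"

definition Jstar :: "real \<Rightarrow> real^3^3" where
  "Jstar l = vector [vector [0, 0, -1], vector [0, l, 0], vector [1, 0, 0]]"

definition Jalpha :: "real \<Rightarrow> real^3^3" where
  "Jalpha a = vector [vector [0, -1/2, -1/2], vector [1, a, -a], vector [1, -a, a]]"

end

theory Submission
  imports Defs
begin

text \<open>With the invariant form K(x,y) = x1 y1 - x2 y2 + x3 y3, every endomorphism of sl(2,R) splits
  as J = S + ad a with S K-selfadjoint. On brackets of basis vectors the torsion condition says that S
  anticommutes with ad a and that S^2 - S ad a - (tr S) S = 2 (K(a,a) + 1). Consequently a is a nonzero
  eigenvector of S, K(a,a) = -1 and S = -(tr S) K(a,-) a, i.e. J x = [x,u] - t K(u,x) u with K(u,u) = -1.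
  Automorphisms act transitively on such u, so J is equivalent to the case u = Y2, whose matrix is
  J_*(t); and t = det J is invariant under equivalence. In the basis (H, X+, X-) the same map has
  matrix J(t/2).\<close>

definition sl2_form :: "real^3 \<Rightarrow> real^3 \<Rightarrow> real" where
  "sl2_form x y = x$1 * y$1 - x$2 * y$2 + x$3 * y$3"

text \<open>The map x \<mapsto> diag(1,-1,1) G x for the symmetric matrix G = (g_ij): these are exactly the
  endomorphisms that are selfadjoint for sl2_form.\<close>

definition sym_endo :: "real \<Rightarrow> real \<Rightarrow> real \<Rightarrow> real \<Rightarrow> real \<Rightarrow> real \<Rightarrow> real^3 \<Rightarrow> real^3" where
  "sym_endo g11 g12 g13 g22 g23 g33 x =
     vector [g11*x$1 + g12*x$2 + g13*x$3, -(g12*x$1 + g22*x$2 + g23*x$3), g13*x$1 + g23*x$2 + g33*x$3]"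

lemma linear_sym_endo: "linear (sym_endo g11 g12 g13 g22 g23 g33)"
  by (rule linearI) (simp_all add: sym_endo_def vec_eq_iff forall_3 algebra_simps)

lemma linear_sl2_bracket_right: "linear (sl2_bracket a)"
  by (rule linearI) (simp_all add: sl2_bracket_def vec_eq_iff forall_3 algebra_simps)

lemma sl2_bracket_self [simp]: "sl2_bracket a a = 0"
  by (simp add: sl2_bracket_def vec_eq_iff forall_3)

lemma sl2_bracket_bracket:
  "sl2_bracket a (sl2_bracket a x) = sl2_form a a *\<^sub>R x - sl2_form a x *\<^sub>R a"
  by (simp add: sl2_bracket_def sl2_form_def vec_eq_iff forall_3 algebra_simps power2_eq_square)

lemma sl2_centralizer:
  assumes "a \<noteq> 0" and "sl2_bracket a v = 0"
  obtains \<mu> where "v = \<mu> *\<^sub>R a"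
proof -
  have eqs: "a$2 * v$3 = a$3 * v$2" "a$1 * v$3 = a$3 * v$1" "a$1 * v$2 = a$2 * v$1"
    using assms(2) by (simp_all add: sl2_bracket_def vec_eq_iff forall_3)
  from assms(1) consider "a$1 \<noteq> 0" | "a$2 \<noteq> 0" | "a$3 \<noteq> 0"
    by (auto simp: vec_eq_iff forall_3)
  then show ?thesis
  proof cases
    case 1
    then have "v = (v$1 / a$1) *\<^sub>R a" using eqs by (simp add: vec_eq_iff forall_3 field_simps)
    then show ?thesis by (rule that)
  next
    case 2
    then have "v = (v$2 / a$2) *\<^sub>R a" using eqs by (simp add: vec_eq_iff forall_3 field_simps)
    then show ?thesis by (rule that)
  next
    case 3
    then have "v = (v$3 / a$3) *\<^sub>R a" using eqs by (simp add: vec_eq_iff forall_3 field_simps)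
    then show ?thesis by (rule that)
  qed
qed

lemma sl2_bracket_not_identically_zero:
  assumes "a \<noteq> 0"
  obtains x where "sl2_bracket a x \<noteq> 0"
proof -
  have "sl2_bracket a (axis 1 1) \<noteq> 0 \<or> sl2_bracket a (axis 2 1) \<noteq> 0"
    using assms by (auto simp: sl2_bracket_def vec_eq_iff forall_3 axis_def)
  then show ?thesis using that by blast
qed

lemma sl2_form_nondegenerate:
  assumes "a \<noteq> 0"
  obtains x where "sl2_form a x \<noteq> 0"
proof
  have "0 < (a$1)^2 + (a$2)^2 + (a$3)^2"
    using assms by (auto simp: vec_eq_iff forall_3 add_pos_nonneg add_nonneg_pos)
  then show "sl2_form a (vector [a$1, - a$2, a$3]) \<noteq> 0"
    by (simp add: sl2_form_def power2_eq_square)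
qed

locale torsion_free_decomposition =
  fixes g11 g12 g13 g22 g23 g33 :: real and a :: "real^3"
  assumes zero_torsion: "zero_torsion (\<lambda>x. sym_endo g11 g12 g13 g22 g23 g33 x + sl2_bracket a x)"
begin

abbreviation "S \<equiv> sym_endo g11 g12 g13 g22 g23 g33"
abbreviation "ad \<equiv> sl2_bracket a"

definition "tr = g11 - g22 + g33"

lemma linear_S: "linear S" by (rule linear_sym_endo)
lemma linear_ad: "linear ad" by (rule linear_sl2_bracket_right)

lemma torsion_vanishes:
  "sl2_bracket (S X + ad X) (S Y + ad Y) - sl2_bracket X Y
      - (S (sl2_bracket (S X + ad X) Y) + ad (sl2_bracket (S X + ad X) Y))
      - (S (sl2_bracket X (S Y + ad Y)) + ad (sl2_bracket X (S Y + ad Y))) = 0"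
  using zero_torsion unfolding zero_torsion_def by blast

lemma anticommute: "S (ad x) = - ad (S x)"
  using torsion_vanishes[of "axis 1 1" "axis 2 1"] torsion_vanishes[of "axis 1 1" "axis 3 1"]
    torsion_vanishes[of "axis 2 1" "axis 3 1"]
  unfolding vec_eq_iff forall_3
  by (simp add: sym_endo_def sl2_bracket_def axis_def; algebra)

lemma quadratic: "S (S x) - S (ad x) - tr *\<^sub>R S x - (2 * (sl2_form a a + 1)) *\<^sub>R x = 0"
  using torsion_vanishes[of "axis 1 1" "axis 2 1"] torsion_vanishes[of "axis 1 1" "axis 3 1"]
    torsion_vanishes[of "axis 2 1" "axis 3 1"]
  unfolding vec_eq_iff forall_3
  by (simp add: sym_endo_def sl2_bracket_def axis_def tr_def sl2_form_def; algebra)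

lemma axis_nonzero: "a \<noteq> 0"
proof
  assume "a = 0"
  \<comment> \<open>then the cofactor matrix of G is diag(1,-1,1), whose determinant -1 would be det(G)^2\<close>
  with torsion_vanishes[of "axis 1 1" "axis 2 1"] torsion_vanishes[of "axis 1 1" "axis 3 1"]
    torsion_vanishes[of "axis 2 1" "axis 3 1"]
  have "g22 * g33 - g23^2 = 1 \<and> g11 * g33 - g13^2 = -1 \<and> g11 * g22 - g12^2 = 1 \<and>
        g12 * g33 = g13 * g23 \<and> g11 * g23 = g12 * g13 \<and> g13 * g22 = g12 * g23"
    unfolding vec_eq_iff forall_3
    by (simp add: sym_endo_def axis_def sl2_bracket_def; algebra)
  then have "(g11 * (g22 * g33 - g23^2) - g12 * (g12 * g33 - g13 * g23) + g13 * (g12 * g23 - g13 * g22))^2 = -1"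
    by algebra
  then show False
    by (metis neg_0_le_iff_le not_one_le_zero zero_le_power2)
qed

lemma axis_eigenvector:
  obtains \<mu> where "S a = \<mu> *\<^sub>R a"
proof -
  have "ad (S a) = 0"
    using anticommute[of a] by (simp add: linear_0[OF linear_S])
  then show ?thesis using sl2_centralizer[OF axis_nonzero] that by blast
qed

lemma ad_quadratic:
  "S (S (ad x)) + S (ad (ad x)) + tr *\<^sub>R S (ad x) - (2 * (sl2_form a a + 1)) *\<^sub>R ad x = 0"
proof -
  have ad_S: "ad (S y) = - S (ad y)" for y
    using anticommute[of y] by simp
  have "ad (S (S x) - S (ad x) - tr *\<^sub>R S x - (2 * (sl2_form a a + 1)) *\<^sub>R x) = 0"
    using quadratic[of x] by (simp add: linear_0[OF linear_ad])
  then show ?thesis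
    by (simp add: linear_diff[OF linear_ad] linear_scale[OF linear_ad] ad_S linear_neg[OF linear_S])
qed

lemma S_ad_ad: "S (ad (ad x)) = - tr *\<^sub>R S (ad x)"
  using ad_quadratic[of x] quadratic[of "ad x"]
  by (simp add: vec_eq_iff forall_3)

lemma S_S_ad: "S (S (ad x)) = (2 * (sl2_form a a + 1)) *\<^sub>R ad x"
  using ad_quadratic[of x] quadratic[of "ad x"]
  by (simp add: vec_eq_iff forall_3)

lemma S_ad_cube: "(sl2_form a a - tr^2) *\<^sub>R S (ad x) = 0"
proof -
  have "ad (ad (ad x)) = sl2_form a a *\<^sub>R ad x"
    by (simp add: sl2_bracket_bracket linear_diff[OF linear_ad] linear_scale[OF linear_ad])
  then have "sl2_form a a *\<^sub>R S (ad x) = S (ad (ad (ad x)))"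
    by (simp add: linear_scale[OF linear_S])
  also have "\<dots> = tr^2 *\<^sub>R S (ad x)"
    by (simp add: S_ad_ad linear_scale[OF linear_S] linear_neg[OF linear_S] power2_eq_square)
  finally show ?thesis by (simp add: algebra_simps)
qed

lemma axis_form: "sl2_form a a = -1"
proof -
  obtain \<mu> where Sa: "S a = \<mu> *\<^sub>R a" by (rule axis_eigenvector)
  define c where "c = 2 * (sl2_form a a + 1)"
  have "(\<mu>^2 - tr * \<mu> - c) *\<^sub>R a = 0"
    using quadratic[of a]
    by (simp add: Sa c_def linear_scale[OF linear_S] linear_0[OF linear_S] algebra_simps power2_eq_square)
  then have char: "\<mu>^2 - tr * \<mu> - c = 0"
    using axis_nonzero by simp
  obtain x where adx: "ad x \<noteq> 0"
    using sl2_bracket_not_identically_zero[OF axis_nonzero] by blast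
  \<comment> \<open>For tr \<noteq> 0, z = S (ad x) satisfies ad z = tr z, which together with S_ad_ad forces S z = 0;
    for tr = 0, S kills the image of ad unless K(a,a) = 0, and in that case \<mu> = 0.\<close>
  have "c = 0"
  proof (cases "tr = 0")
    case False
    define z where "z = S (ad x)"
    have "ad z = tr *\<^sub>R z"
      using anticommute[of "ad x"] S_ad_ad[of x] unfolding z_def by simp
    then have "ad (z /\<^sub>R tr) = z"
      using False by (simp add: linear_scale[OF linear_ad])
    then have "S (ad z) = - tr *\<^sub>R S z"
      using S_ad_ad[of "z /\<^sub>R tr"] False by (simp add: linear_scale[OF linear_S])
    moreover have "S (ad z) = tr *\<^sub>R S z"
      using \<open>ad z = tr *\<^sub>R z\<close> by (simp add: linear_scale[OF linear_S])
    ultimately have "tr *\<^sub>R S z = 0"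
      by (simp add: vec_eq_iff)
    then have "S z = 0"
      using False by simp
    then show ?thesis
      using S_S_ad[of x] adx unfolding z_def c_def by simp
  next
    case True
    show ?thesis
    proof (cases "sl2_form a a = 0")
      case False
      then have "S (ad x) = 0"
        using S_ad_cube[of x] True by simp
      then show ?thesis
        using S_S_ad[of x] adx unfolding c_def by (simp add: linear_0[OF linear_S])
    next
      case q0: True
      obtain y where y: "sl2_form a y \<noteq> 0"
        using sl2_form_nondegenerate[OF axis_nonzero] by blast
      have "S (ad (ad y)) = 0"
        using S_ad_ad[of y] True by simp
      then have "(sl2_form a y * \<mu>) *\<^sub>R a = 0"
        by (simp add: sl2_bracket_bracket q0 Sa linear_scale[OF linear_S] linear_neg[OF linear_S])
      then have "\<mu> = 0"
        using y axis_nonzero by simp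
      then show ?thesis using char True by simp
    qed
  qed
  then show ?thesis by (simp add: c_def)
qed

lemma S_rank_one: "S x = - (tr * sl2_form a x) *\<^sub>R a"
proof -
  obtain \<mu> where Sa: "S a = \<mu> *\<^sub>R a" by (rule axis_eigenvector)
  have "(sl2_form a a - tr^2) \<noteq> 0"
    using axis_form by (smt (verit) zero_le_power2)
  then have "S (ad y) = 0" for y
    using S_ad_cube[of y] by simp
  then have "S (ad (ad y)) = 0" for y by simp
  have S_eq: "S y = - (\<mu> * sl2_form a y) *\<^sub>R a" for y
  proof -
    have "S (ad (ad y)) = - S y - (sl2_form a y * \<mu>) *\<^sub>R a"
      by (simp add: sl2_bracket_bracket axis_form Sa linear_diff[OF linear_S]
          linear_neg[OF linear_S] linear_scale[OF linear_S])
    then show ?thesis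
      using \<open>S (ad (ad y)) = 0\<close> by (simp add: vec_eq_iff algebra_simps)
  qed
  have "g11 = - \<mu> * (a$1)^2" "g22 = - \<mu> * (a$2)^2" "g33 = - \<mu> * (a$3)^2"
    using arg_cong[OF S_eq[of "axis 1 1"], of "\<lambda>v. v$1"] arg_cong[OF S_eq[of "axis 2 1"], of "\<lambda>v. v$2"]
      arg_cong[OF S_eq[of "axis 3 1"], of "\<lambda>v. v$3"]
    by (simp_all add: sym_endo_def sl2_form_def axis_def power2_eq_square)
  then have "tr = - \<mu> * sl2_form a a"
    unfolding tr_def by (simp add: sl2_form_def power2_eq_square algebra_simps)
  then have "tr = \<mu>" by (simp add: axis_form)
  then show ?thesis using S_eq by simp
qed

end

definition axial_endo :: "real^3 \<Rightarrow> real \<Rightarrow> real^3 \<Rightarrow> real^3" where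
  "axial_endo u t x = sl2_bracket x u - (t * sl2_form u x) *\<^sub>R u"

lemma linear_axial_endo: "linear (axial_endo u t)"
  by (rule linearI) (simp_all add: axial_endo_def sl2_bracket_def sl2_form_def vec_eq_iff forall_3 algebra_simps)

lemma axial_endo_Y2: "axial_endo (Ybasis 2) t x = vector [- x$3, t * x$2, x$1]"
  by (simp add: axial_endo_def Ybasis_def sl2_bracket_def sl2_form_def vec_eq_iff forall_3 axis_def)

lemma linear_eq_sym_endo_plus_bracket:
  assumes "linear J"
  obtains g11 g12 g13 g22 g23 g33 a
  where "J = (\<lambda>x. sym_endo g11 g12 g13 g22 g23 g33 x + sl2_bracket a x)"
proof -
  define m where "m i j = J (axis j 1) $ i" for i j :: 3
  have Jx: "J x $ i = m i 1 * x$1 + m i 2 * x$2 + m i 3 * x$3" for x i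
  proof -
    have "J x = matrix J *v x" by (simp add: matrix_works assms)
    then show ?thesis by (simp add: m_def matrix_vector_mult_def matrix_def sum_3)
  qed
  have "J = (\<lambda>x. sym_endo (m 1 1) ((m 1 2 - m 2 1) / 2) ((m 1 3 + m 3 1) / 2) (- m 2 2)
              ((m 3 2 - m 2 3) / 2) (m 3 3) x
            + sl2_bracket (vector [(m 2 3 + m 3 2) / 2, (m 1 3 - m 3 1) / 2, - (m 1 2 + m 2 1) / 2]) x)"
    by (rule ext) (simp add: vec_eq_iff forall_3 Jx sym_endo_def sl2_bracket_def field_simps)
  then show ?thesis by (rule that)
qed

lemma zero_torsion_imp_axial_endo:
  assumes "linear J" and "zero_torsion J"
  obtains u t where "sl2_form u u = -1" and "J = axial_endo u t"
proof -
  obtain g11 g12 g13 g22 g23 g33 a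
    where J: "J = (\<lambda>x. sym_endo g11 g12 g13 g22 g23 g33 x + sl2_bracket a x)"
    using linear_eq_sym_endo_plus_bracket[OF assms(1)] .
  interpret torsion_free_decomposition g11 g12 g13 g22 g23 g33 a
    using assms(2) J by unfold_locales simp
  have "J = axial_endo (- a) tr"
    by (rule ext) (simp add: J S_rank_one axial_endo_def sl2_bracket_def sl2_form_def vec_eq_iff forall_3 algebra_simps)
  moreover have "sl2_form (- a) (- a) = -1"
    using axis_form by (simp add: sl2_form_def)
  ultimately show ?thesis using that by blast
qed

text \<open>When sl2_form u u = -1, the images of Y1, Y2, Y3 have the same brackets and sl2_form values as
  Y1, Y2, Y3 themselves; the factor 1 / sqrt (1 + u3^2) normalises the first and the third.\<close>

definition sl2_frame :: "real^3 \<Rightarrow> real^3 \<Rightarrow> real^3" where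
  "sl2_frame u x = (x$1 / sqrt (1 + (u$3)^2)) *\<^sub>R vector [u$2, u$1, 0] + x$2 *\<^sub>R u
     + (x$3 / sqrt (1 + (u$3)^2)) *\<^sub>R vector [u$1 * u$3, u$2 * u$3, 1 + (u$3)^2]"

lemma linear_sl2_frame: "linear (sl2_frame u)"
  by (rule linearI) (simp_all add: sl2_frame_def vec_eq_iff forall_3 add_divide_distrib algebra_simps)

lemma sl2_frame_Y2: "sl2_frame u (Ybasis 2) = u"
  by (simp add: sl2_frame_def Ybasis_def vec_eq_iff forall_3 axis_def)

lemma inverse_sqrt_normalises: "(1 / sqrt (1 + c^2))^2 * (1 + c^2) = (1::real)"
proof -
  have "0 < 1 + c^2" by (simp add: add_pos_nonneg)
  then show ?thesis by (simp add: power_divide)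
qed

lemma sl2_frame_eq:
  assumes "z = 1 / sqrt (1 + (u$3)^2)"
  shows "sl2_frame u x = vector [z * x$1 * u$2 + x$2 * u$1 + z * x$3 * u$1 * u$3,
                                 z * x$1 * u$1 + x$2 * u$2 + z * x$3 * u$2 * u$3,
                                 x$2 * u$3 + z * x$3 * (1 + (u$3)^2)]"
  by (simp add: assms sl2_frame_def vec_eq_iff forall_3)

lemma sl2_frame_bracket:
  assumes "sl2_form u u = -1"
  shows "sl2_frame u (sl2_bracket x y) = sl2_bracket (sl2_frame u x) (sl2_frame u y)"
proof -
  define z where "z = 1 / sqrt (1 + (u$3)^2)"
  have "z^2 * (1 + (u$3)^2) = 1" unfolding z_def by (rule inverse_sqrt_normalises)
  with assms show ?thesis
    unfolding sl2_frame_eq[OF z_def] vec_eq_iff forall_3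
    by (simp add: sl2_bracket_def sl2_form_def; algebra)
qed

lemma sl2_frame_form:
  assumes "sl2_form u u = -1"
  shows "sl2_form (sl2_frame u x) (sl2_frame u y) = sl2_form x y"
proof -
  define z where "z = 1 / sqrt (1 + (u$3)^2)"
  have "z^2 * (1 + (u$3)^2) = 1" unfolding z_def by (rule inverse_sqrt_normalises)
  with assms show ?thesis
    unfolding sl2_frame_eq[OF z_def]
    by (simp add: sl2_form_def; algebra)
qed

lemma form_preserving_imp_inj:
  assumes "linear \<Psi>" and "\<And>x y. sl2_form (\<Psi> x) (\<Psi> y) = sl2_form x y"
  shows "inj \<Psi>"
  unfolding linear_injective_0[OF assms(1)]
proof (intro allI impI)
  fix x assume "\<Psi> x = 0"
  then have "sl2_form x y = 0" for y
    using assms(2)[of x y] by (simp add: sl2_form_def)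
  from this[of "axis 1 1"] this[of "axis 2 1"] this[of "axis 3 1"]
  show "x = 0" by (simp add: sl2_form_def axis_def vec_eq_iff forall_3)
qed

lemma axial_endo_conj:
  assumes "linear \<Psi>"
    and "\<And>x y. \<Psi> (sl2_bracket x y) = sl2_bracket (\<Psi> x) (\<Psi> y)"
    and "\<And>x y. sl2_form (\<Psi> x) (\<Psi> y) = sl2_form x y"
  shows "\<Psi> (axial_endo u t x) = axial_endo (\<Psi> u) t (\<Psi> x)"
  by (simp add: axial_endo_def linear_diff[OF assms(1)] linear_scale[OF assms(1)] assms(2,3))

lemma sl2_aut_inv:
  assumes "linear \<Psi>" and "inj \<Psi>" and "\<And>x y. \<Psi> (sl2_bracket x y) = sl2_bracket (\<Psi> x) (\<Psi> y)"
  shows "sl2_aut (inv \<Psi>)"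
  unfolding sl2_aut_def
proof (intro conjI allI)
  have "surj \<Psi>" using linear_injective_imp_surjective assms(1,2) by blast
  then have bij: "bij \<Psi>" using assms(2) by (simp add: bij_def)
  show "linear (inv \<Psi>)" using inj_linear_imp_inv_linear assms(1,2) by blast
  show "bij (inv \<Psi>)" using bij_imp_bij_inv bij by blast
  fix X Y
  have "\<Psi> (sl2_bracket (inv \<Psi> X) (inv \<Psi> Y)) = sl2_bracket X Y"
    by (simp add: assms(3) surj_f_inv_f[OF \<open>surj \<Psi>\<close>])
  then show "inv \<Psi> (sl2_bracket X Y) = sl2_bracket (inv \<Psi> X) (inv \<Psi> Y)"
    by (metis inv_f_f[OF assms(2)])
qed

lemma axial_endo_equiv_Y2:
  assumes "sl2_form u u = -1"
  shows "sl2_equiv (axial_endo u t) (axial_endo (Ybasis 2) t)"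
proof -
  let ?\<Psi> = "sl2_frame u"
  have inj: "inj ?\<Psi>"
    by (rule form_preserving_imp_inj[OF linear_sl2_frame sl2_frame_form[OF assms]])
  have aut: "sl2_aut (inv ?\<Psi>)"
    by (rule sl2_aut_inv[OF linear_sl2_frame inj sl2_frame_bracket[OF assms]])
  have "bij ?\<Psi>"
    using inj linear_injective_imp_surjective[OF linear_sl2_frame] by (simp add: bij_def)
  then have "inv (inv ?\<Psi>) = ?\<Psi>" by (rule inv_inv_eq)
  moreover have "axial_endo u t (?\<Psi> x) = ?\<Psi> (axial_endo (Ybasis 2) t x)" for x
    using axial_endo_conj[OF linear_sl2_frame sl2_frame_bracket[OF assms] sl2_frame_form[OF assms]]
    by (simp add: sl2_frame_Y2)
  ultimately have "axial_endo (Ybasis 2) t = inv ?\<Psi> \<circ> axial_endo u t \<circ> inv (inv ?\<Psi>)"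
    by (simp add: fun_eq_iff inv_f_f[OF inj])
  with aut show ?thesis unfolding sl2_equiv_def by blast
qed

lemma zero_torsion_sl2_equiv:
  assumes "sl2_equiv J L" and "zero_torsion L"
  shows "zero_torsion J"
proof -
  obtain \<Phi> where aut: "sl2_aut \<Phi>" and L: "L = \<Phi> \<circ> J \<circ> inv \<Phi>"
    using assms(1) unfolding sl2_equiv_def by blast
  have lin: "linear \<Phi>" and inj: "inj \<Phi>"
    and br: "\<And>X Y. \<Phi> (sl2_bracket X Y) = sl2_bracket (\<Phi> X) (\<Phi> Y)"
    using aut bij_is_inj unfolding sl2_aut_def by auto
  have \<Phi>J: "\<Phi> (J x) = L (\<Phi> x)" for x
    using L inv_f_f[OF inj] by simp
  show ?thesis unfolding zero_torsion_def
  proof (intro allI)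
    fix X Y
    let ?T = "sl2_bracket (J X) (J Y) - sl2_bracket X Y - J (sl2_bracket (J X) Y) - J (sl2_bracket X (J Y))"
    have "\<Phi> ?T = sl2_bracket (L (\<Phi> X)) (L (\<Phi> Y)) - sl2_bracket (\<Phi> X) (\<Phi> Y)
        - L (sl2_bracket (L (\<Phi> X)) (\<Phi> Y)) - L (sl2_bracket (\<Phi> X) (L (\<Phi> Y)))"
      by (simp add: linear_diff[OF lin] br \<Phi>J)
    also have "\<dots> = 0"
      using assms(2) unfolding zero_torsion_def by blast
    finally show "?T = 0"
      using inj linear_0[OF lin] by (metis injD)
  qed
qed

lemma det_matrix_sl2_equiv:
  assumes "linear L" and "sl2_equiv L L'"
  shows "det (matrix L') = det (matrix L)"
proof -
  obtain \<Phi> where aut: "sl2_aut \<Phi>" and L': "L' = \<Phi> \<circ> L \<circ> inv \<Phi>"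
    using assms(2) unfolding sl2_equiv_def by blast
  have lin: "linear \<Phi>" and bij: "bij \<Phi>"
    using aut unfolding sl2_aut_def by auto
  have lin_inv: "linear (inv \<Phi>)"
    using inj_linear_imp_inv_linear lin bij_is_inj[OF bij] by blast
  have "matrix \<Phi> ** matrix (inv \<Phi>) = mat 1"
    using matrix_compose[OF lin_inv lin] surj_iff[of \<Phi>] bij_is_surj[OF bij] by (simp add: matrix_id_mat_1)
  then have inverse: "det (matrix \<Phi>) * det (matrix (inv \<Phi>)) = 1"
    by (metis det_I det_mul)
  have "matrix L' = matrix \<Phi> ** (matrix L ** matrix (inv \<Phi>))"
    using matrix_compose[OF linear_compose[OF lin_inv assms(1)] lin] matrix_compose[OF lin_inv assms(1)]
    by (simp add: L' comp_assoc)
  then show ?thesis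
    using inverse by (simp add: det_mul algebra_simps)
qed

lemma zero_torsion_axial_endo_Y2: "zero_torsion (axial_endo (Ybasis 2) t)"
  unfolding zero_torsion_def vec_eq_iff forall_3
  by (simp add: axial_endo_Y2 sl2_bracket_def algebra_simps)

lemma det_matrix_axial_endo_Y2: "det (matrix (axial_endo (Ybasis 2) t)) = t"
  by (simp add: det_3 matrix_def axial_endo_Y2 axis_def)

lemma zero_torsion_iff_equiv_axial_endo_Y2:
  assumes "linear J"
  shows "zero_torsion J \<longleftrightarrow> (\<exists>t. sl2_equiv J (axial_endo (Ybasis 2) t))"
proof
  assume "zero_torsion J"
  then obtain u t where "sl2_form u u = -1" and "J = axial_endo u t"
    using zero_torsion_imp_axial_endo[OF assms] by blast
  then show "\<exists>t. sl2_equiv J (axial_endo (Ybasis 2) t)"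
    using axial_endo_equiv_Y2 by blast
next
  assume "\<exists>t. sl2_equiv J (axial_endo (Ybasis 2) t)"
  then show "zero_torsion J"
    using zero_torsion_sl2_equiv zero_torsion_axial_endo_Y2 by blast
qed

lemma axial_endo_Y2_equiv_imp_eq:
  assumes "sl2_equiv (axial_endo (Ybasis 2) l) (axial_endo (Ybasis 2) m)"
  shows "l = m"
  using det_matrix_sl2_equiv[OF linear_axial_endo assms] by (simp add: det_matrix_axial_endo_Y2)

lemma has_matrix_in_basis_unique:
  assumes "linear L" and "linear L'" and "span (range b) = UNIV"
    and "has_matrix_in_basis L b M" and "has_matrix_in_basis L' b M"
  shows "L = L'"
proof
  fix x
  have "x \<in> span (range b)" using assms(3) by simp
  moreover have "L y = L' y" if "y \<in> range b" for y
    using that assms(4,5) unfolding has_matrix_in_basis_def by auto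
  ultimately show "L x = L' x"
    using linear_eq_on_span[OF assms(1,2)] by blast
qed

lemma span_range_eq_UNIV:
  fixes b :: "3 \<Rightarrow> real^3"
  assumes "\<And>j. axis j 1 \<in> span (range b)"
  shows "span (range b) = UNIV"
proof -
  have "x \<in> span (range b)" for x :: "real^3"
  proof -
    have "(\<Sum>i\<in>UNIV. x$i *s axis i 1) \<in> span (range b)"
      by (intro span_sum) (simp add: assms scalar_mult_eq_scaleR span_scale)
    then show ?thesis by (simp add: basis_expansion)
  qed
  then show ?thesis by blast
qed

lemma span_Ybasis: "span (range Ybasis) = UNIV"
  by (rule span_range_eq_UNIV) (simp add: Ybasis_def span_base)

lemma span_HXbasis: "span (range HXbasis) = UNIV"
proof (rule span_range_eq_UNIV)
  fix j :: 3
  have HX: "HXbasis i \<in> span (range HXbasis)" for i by (simp add: span_base)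
  have "axis 1 1 = (1/2) *\<^sub>R HXbasis 1" "axis 2 1 = (1/2) *\<^sub>R (HXbasis 2 - HXbasis 3)"
    "axis 3 1 = (1/2) *\<^sub>R (HXbasis 2 + HXbasis 3)"
    by (simp_all add: HXbasis_def vec_eq_iff forall_3 axis_def)
  then show "axis j 1 \<in> span (range HXbasis)"
    using HX exhaust_3[of j] by (auto simp: span_scale span_add span_diff)
qed

lemma has_matrix_Ybasis_Jstar_iff:
  assumes "linear L"
  shows "has_matrix_in_basis L Ybasis (Jstar l) \<longleftrightarrow> L = axial_endo (Ybasis 2) l"
proof -
  have "has_matrix_in_basis (axial_endo (Ybasis 2) l) Ybasis (Jstar l)"
    unfolding has_matrix_in_basis_def forall_3 sum_3 axial_endo_Y2
    by (simp add: Ybasis_def Jstar_def axis_def vec_eq_iff forall_3)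
  then show ?thesis
    using has_matrix_in_basis_unique[OF assms linear_axial_endo span_Ybasis] by blast
qed

lemma has_matrix_HXbasis_Jalpha_iff:
  assumes "linear L"
  shows "has_matrix_in_basis L HXbasis (Jalpha a) \<longleftrightarrow> L = axial_endo (Ybasis 2) (2 * a)"
proof -
  have "has_matrix_in_basis (axial_endo (Ybasis 2) (2 * a)) HXbasis (Jalpha a)"
    unfolding has_matrix_in_basis_def forall_3 sum_3 axial_endo_Y2
    by (simp add: HXbasis_def Jalpha_def vec_eq_iff forall_3)
  then show ?thesis
    using has_matrix_in_basis_unique[OF assms linear_axial_endo span_HXbasis] by blast
qed


lemma ex_Ybasis_Jstar_iff:
  "(\<exists>l L. linear L \<and> has_matrix_in_basis L Ybasis (Jstar l) \<and> P L) \<longleftrightarrow>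
     (\<exists>t. P (axial_endo (Ybasis 2) t))"
proof
  assume "\<exists>l L. linear L \<and> has_matrix_in_basis L Ybasis (Jstar l) \<and> P L"
  then obtain l L where "linear L" "has_matrix_in_basis L Ybasis (Jstar l)" "P L" by blast
  then show "\<exists>t. P (axial_endo (Ybasis 2) t)" using has_matrix_Ybasis_Jstar_iff by auto
next
  assume "\<exists>t. P (axial_endo (Ybasis 2) t)"
  then show "\<exists>l L. linear L \<and> has_matrix_in_basis L Ybasis (Jstar l) \<and> P L"
    using has_matrix_Ybasis_Jstar_iff[OF linear_axial_endo] linear_axial_endo by blast
qed

lemma ex_HXbasis_Jalpha_iff:
  "(\<exists>a L. linear L \<and> has_matrix_in_basis L HXbasis (Jalpha a) \<and> P L) \<longleftrightarrow>
     (\<exists>t. P (axial_endo (Ybasis 2) t))"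
proof
  assume "\<exists>a L. linear L \<and> has_matrix_in_basis L HXbasis (Jalpha a) \<and> P L"
  then obtain a L where "linear L" "has_matrix_in_basis L HXbasis (Jalpha a)" "P L" by blast
  then show "\<exists>t. P (axial_endo (Ybasis 2) t)" using has_matrix_HXbasis_Jalpha_iff by auto
next
  assume "\<exists>t. P (axial_endo (Ybasis 2) t)"
  then obtain t where "P (axial_endo (Ybasis 2) (2 * (t / 2)))" by auto
  then show "\<exists>a L. linear L \<and> has_matrix_in_basis L HXbasis (Jalpha a) \<and> P L"
    using has_matrix_HXbasis_Jalpha_iff[OF linear_axial_endo] linear_axial_endo by blast
qed

lemma Jstar_equiv_imp_eq:
  assumes "linear L" "has_matrix_in_basis L Ybasis (Jstar l)"
    and "linear L'" "has_matrix_in_basis L' Ybasis (Jstar m)" and "sl2_equiv L L'"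
  shows "l = m"
  using assms axial_endo_Y2_equiv_imp_eq has_matrix_Ybasis_Jstar_iff by auto

lemma Jalpha_equiv_imp_eq:
  assumes "linear L" "has_matrix_in_basis L HXbasis (Jalpha a)"
    and "linear L'" "has_matrix_in_basis L' HXbasis (Jalpha b)" and "sl2_equiv L L'"
  shows "a = b"
proof -
  have "L = axial_endo (Ybasis 2) (2 * a)" "L' = axial_endo (Ybasis 2) (2 * b)"
    using assms(1-4) has_matrix_HXbasis_Jalpha_iff by blast+
  then show ?thesis
    using assms(5) axial_endo_Y2_equiv_imp_eq[of "2 * a" "2 * b"] by simp
qed

theorem lemma1:
  fixes J :: "real^3 \<Rightarrow> real^3"
  assumes "linear J"
  shows "(zero_torsion J \<longleftrightarrow>
            (\<exists>l L. linear L \<and> has_matrix_in_basis L Ybasis (Jstar l) \<and> sl2_equiv J L))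
       \<and> (\<forall>l m L L'. linear L \<and> has_matrix_in_basis L Ybasis (Jstar l) \<and>
            linear L' \<and> has_matrix_in_basis L' Ybasis (Jstar m) \<and> l \<noteq> m
            \<longrightarrow> \<not> sl2_equiv L L')
       \<and> (zero_torsion J \<longleftrightarrow>
            (\<exists>a L. linear L \<and> has_matrix_in_basis L HXbasis (Jalpha a) \<and> sl2_equiv J L))
       \<and> (\<forall>a b L L'. linear L \<and> has_matrix_in_basis L HXbasis (Jalpha a) \<and>
            linear L' \<and> has_matrix_in_basis L' HXbasis (Jalpha b) \<and> a \<noteq> b
            \<longrightarrow> \<not> sl2_equiv L L')"
  unfolding ex_Ybasis_Jstar_iff ex_HXbasis_Jalpha_iff zero_torsion_iff_equiv_axial_endo_Y2[OF assms]
  using Jstar_equiv_imp_eq Jalpha_equiv_imp_eq by blast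

end
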